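(* Let $p$ be a prime and let $G$ be a finite Abelian $p$-group. Let $S$ be a sequence over $G$ with $|S|=\mathsf{D}(G)+i-1$, where $i\in\{1,2,\dots,p\}$, and let $\mathcal{A}$ be any subset of $\{1,2,\dots,p-1\}$ with exactly $i-1$ elements. Then $S$ contains a non-empty zero-sum subsequence $S'$ such that $|S'|\not\equiv b \pmod p$ for all $b\in\mathcal{A}$.
   Context: A sequence over a finite Abelian group $G$ (written additively) is a finite multiset of elements of $G$; its length $|S|$ is the number of terms counted with multiplicity, and a subsequence is a sub-multiset. A zero-sum sequence is one whose terms sum to $0$. The Davenport constant $\mathsf{D}(G)$ is the smallest positive integer $t$ such that every sequence over $G$ of length at least $t$ contains a non-empty zero-sum subsequence. *)

theory Defs
  imports Main "HOL-Library.Multiset" "HOL-Number_Theory.Cong"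
begin

text \<open>Sequences over an abelian group are finite multisets. A zero-sum subsequence
of S is a sub-multiset T of S with sum_mset T = 0.\<close>

definition has_nonempty_zero_sum_subseq :: "'a::comm_monoid_add multiset \<Rightarrow> bool" where
  "has_nonempty_zero_sum_subseq S \<longleftrightarrow> (\<exists>T. T \<subseteq># S \<and> T \<noteq> {#} \<and> sum_mset T = 0)"

definition davenport :: "'a::comm_monoid_add itself \<Rightarrow> nat" where
  "davenport _ = (LEAST t. t > 0 \<and>
     (\<forall>S :: 'a multiset. size S \<ge> t \<longrightarrow> has_nonempty_zero_sum_subseq S))"

end

theory Submission
  imports Defs "HOL-Library.Poly_Mapping" "HOL-Library.FuncSet"
begin

text \<open>A finite abelian \<open>p\<close>-group is a direct sum of cyclic groups of orders \<open>q j = p ^ a j\<close>,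
  and \<open>D(G) = 1 + \<Sum>j. (q j - 1)\<close> (Olson): the lower bound is witnessed by the sequence
  repeating each generator \<open>q j - 1\<close> times, the upper bound by a computation in the group
  ring \<open>\<int>[G]\<close>, which shows that the number of zero-sum subsets of a long sequence, counted
  with sign \<open>(-1) ^ card J\<close>, is divisible by \<open>p\<close>. Applied after removing \<open>m\<close> terms, this
  gives the same divisibility for the weights \<open>(-1) ^ card J * (card J choose m)\<close> when the
  sequence has length at least \<open>D(G) + m\<close>, hence for \<open>(-1) ^ card J * Q (card J)\<close> with any
  integer polynomial \<open>Q\<close> of degree at most \<open>m\<close>. Taking \<open>Q k = \<Prod>b\<in>A. (k - b)\<close>, if every
  nonempty zero-sum subsequence had length \<open>\<equiv> b (mod p)\<close> for some \<open>b \<in> A\<close>, only the empty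
  subsequence would survive modulo \<open>p\<close>, giving \<open>p dvd \<Prod>b\<in>A. b\<close>, which is impossible.\<close>

section \<open>Multiples and orders in finite abelian groups\<close>

primrec nsmul :: "nat \<Rightarrow> 'a::monoid_add \<Rightarrow> 'a" where
  "nsmul 0 g = 0"
| "nsmul (Suc n) g = g + nsmul n g"

lemma nsmul_add: "nsmul (m + n) g = nsmul m g + nsmul n g"
  by (induction m) (auto simp: add.assoc)

lemma nsmul_mult: "nsmul (m * n) g = nsmul m (nsmul n g)"
  by (induction m) (auto simp: nsmul_add)

lemma nsmul_zero_right [simp]: "nsmul n 0 = 0"
  by (induction n) auto

lemma nsmul_add_right: "nsmul n (g + h) = nsmul n g + nsmul n (h :: 'a::comm_monoid_add)"
  by (induction n) (auto simp: algebra_simps)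

lemma nsmul_minus_right: "nsmul n (- g) = - nsmul n (g :: 'a::ab_group_add)"
  by (induction n) auto

lemma nsmul_diff_right: "nsmul n (g - h) = nsmul n g - nsmul n (h :: 'a::ab_group_add)"
  by (metis diff_conv_add_uminus nsmul_add_right nsmul_minus_right)

lemma sum_constant_nsmul: "finite A \<Longrightarrow> (\<Sum>x\<in>A. g) = nsmul (card A) (g :: 'a::comm_monoid_add)"
  by (induction A rule: finite_induct) auto

lemma nsmul_card_UNIV: "nsmul (card (UNIV :: 'a set)) g = (0 :: 'a::{finite,ab_group_add})"
proof -
  txt \<open>Translation by \<open>g\<close> permutes the group.\<close>
  have "(\<Sum>x\<in>UNIV. x + g) = (\<Sum>x\<in>(UNIV::'a set). x)"
    by (rule sum.reindex_bij_witness[of _ "\<lambda>x. x - g" "\<lambda>x. x + g"]) auto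
  then show ?thesis by (simp add: sum.distrib sum_constant_nsmul)
qed

definition add_order :: "'a::monoid_add \<Rightarrow> nat" where
  "add_order g = (LEAST n. 0 < n \<and> nsmul n g = 0)"

lemma add_order_pos_nsmul:
  fixes g :: "'a::{finite,ab_group_add}"
  shows "0 < add_order g \<and> nsmul (add_order g) g = 0"
  unfolding add_order_def
  by (rule LeastI[of _ "card (UNIV::'a set)"]) (simp add: nsmul_card_UNIV finite_UNIV_card_ge_0)

lemma nsmul_eq_0_iff:
  fixes g :: "'a::{finite,ab_group_add}"
  shows "nsmul n g = 0 \<longleftrightarrow> add_order g dvd n"
proof
  assume "add_order g dvd n"
  then obtain c where "n = add_order g * c" by auto
  then show "nsmul n g = 0" using add_order_pos_nsmul[of g] by (simp add: mult.commute nsmul_mult)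
next
  assume n: "nsmul n g = 0"
  let ?o = "add_order g"
  have "nsmul n g = nsmul (n div ?o) (nsmul ?o g) + nsmul (n mod ?o) g"
    by (metis div_mult_mod_eq mult.commute nsmul_add nsmul_mult)
  then have "nsmul (n mod ?o) g = 0" using n add_order_pos_nsmul[of g] by simp
  moreover have "n mod ?o < ?o" using add_order_pos_nsmul[of g] by simp
  ultimately have "n mod ?o = 0"
    using not_less_Least[of "n mod ?o" "\<lambda>n. 0 < n \<and> nsmul n g = 0"] unfolding add_order_def
    by auto
  then show "add_order g dvd n" by auto
qed

lemma add_order_eq_1_iff: "add_order g = 1 \<longleftrightarrow> g = (0 :: 'a::{finite,ab_group_add})"
  using nsmul_eq_0_iff[of 1 g] by auto

lemma add_order_prime_power:
  fixes g :: "'a::{finite,ab_group_add}"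
  assumes "prime p" "card (UNIV :: 'a set) = p ^ k"
  shows "\<exists>b. add_order g = p ^ b"
proof -
  have "add_order g dvd p ^ k" using nsmul_card_UNIV[of g] assms(2) nsmul_eq_0_iff by metis
  then show ?thesis using assms(1) by (auto simp: divides_primepow_nat)
qed

text \<open>In a finite group these are exactly the subgroups, see \<open>add_submonoid_minus\<close>.\<close>

definition add_submonoid :: "'a::monoid_add set \<Rightarrow> bool" where
  "add_submonoid K \<longleftrightarrow> 0 \<in> K \<and> (\<forall>x\<in>K. \<forall>y\<in>K. x + y \<in> K)"

lemma add_submonoid_zero: "add_submonoid K \<Longrightarrow> 0 \<in> K"
  by (simp add: add_submonoid_def)

lemma add_submonoid_add: "add_submonoid K \<Longrightarrow> x \<in> K \<Longrightarrow> y \<in> K \<Longrightarrow> x + y \<in> K"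
  by (simp add: add_submonoid_def)

lemma add_submonoid_nsmul: "add_submonoid K \<Longrightarrow> x \<in> K \<Longrightarrow> nsmul n x \<in> K"
  by (induction n) (auto simp: add_submonoid_def)

lemma add_submonoid_sum:
  "add_submonoid K \<Longrightarrow> (\<And>j. j \<in> J \<Longrightarrow> f j \<in> K) \<Longrightarrow> sum f J \<in> K"
  by (induction J rule: infinite_finite_induct) (auto simp: add_submonoid_def)

lemma add_submonoid_minus:
  fixes K :: "'a::{finite,ab_group_add} set"
  assumes "add_submonoid K" "x \<in> K"
  shows "- x \<in> K"
proof -
  let ?N = "card (UNIV :: 'a set)"
  have "nsmul ?N x = x + nsmul (?N - 1) x"
    by (metis Suc_diff_1 finite_UNIV_card_ge_0 finite nsmul.simps(2))
  then have "- x = nsmul (?N - 1) x"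
    by (metis add.commute add_eq_0_iff nsmul_card_UNIV)
  then show ?thesis using add_submonoid_nsmul assms by metis
qed

lemma add_submonoid_diff:
  fixes K :: "'a::{finite,ab_group_add} set"
  shows "add_submonoid K \<Longrightarrow> x \<in> K \<Longrightarrow> y \<in> K \<Longrightarrow> x - y \<in> K"
  by (metis diff_conv_add_uminus add_submonoid_add add_submonoid_minus)

definition multiples :: "'a::monoid_add \<Rightarrow> 'a set" where
  "multiples g = range (\<lambda>t. nsmul t g)"

definition adjoin :: "'a::monoid_add set \<Rightarrow> 'a \<Rightarrow> 'a set" where
  "adjoin K g = {k + nsmul t g | k t. k \<in> K}"

lemma nsmul_in_multiples [simp]: "nsmul t g \<in> multiples g"
  by (simp add: multiples_def)

lemma nsmul_eq_0_if_inter_multiples: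
  "K \<inter> multiples g = {0} \<Longrightarrow> nsmul t g \<in> K \<Longrightarrow> nsmul t g = 0"
  by (metis IntI nsmul_in_multiples singletonD)

lemma subset_adjoin: "K \<subseteq> adjoin K g"
  unfolding adjoin_def by (force intro: exI[of _ 0])

lemma nsmul_in_adjoin: "0 \<in> K \<Longrightarrow> nsmul t g \<in> adjoin K g"
  unfolding adjoin_def by force

lemma add_submonoid_adjoin:
  fixes K :: "'a::comm_monoid_add set"
  assumes K: "add_submonoid K"
  shows "add_submonoid (adjoin K g)"
  unfolding add_submonoid_def
proof (intro conjI ballI)
  show "0 \<in> adjoin K g" using nsmul_in_adjoin[of K 0 g] K by (simp add: add_submonoid_zero)
next
  fix x y assume "x \<in> adjoin K g" "y \<in> adjoin K g"
  then obtain k1 t1 k2 t2 where "k1 \<in> K" "k2 \<in> K" "x = k1 + nsmul t1 g" "y = k2 + nsmul t2 g"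
    unfolding adjoin_def by blast
  moreover have "k1 + k2 \<in> K" using K \<open>k1 \<in> K\<close> \<open>k2 \<in> K\<close> by (rule add_submonoid_add)
  moreover have "x + y = (k1 + k2) + nsmul (t1 + t2) g"
    using \<open>x = _\<close> \<open>y = _\<close> by (simp add: nsmul_add algebra_simps)
  ultimately show "x + y \<in> adjoin K g"
    unfolding adjoin_def by blast
qed

lemma adjoin_subset:
  "add_submonoid H \<Longrightarrow> K \<subseteq> H \<Longrightarrow> g \<in> H \<Longrightarrow> adjoin K g \<subseteq> H"
  unfolding adjoin_def by (auto intro: add_submonoid_add add_submonoid_nsmul)

section \<open>Structure of finite abelian \<open>p\<close>-groups\<close>

lemma dvd_coeff_of_p_multiple:
  fixes K :: "'a::{finite,ab_group_add} set"
  assumes p: "0 < p" and K: "add_submonoid K" "K \<inter> multiples e = {0}"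
    and e: "add_order e = p ^ a" "a \<ge> 1" and h: "nsmul (p ^ a) h = 0"
    and k: "k \<in> K" and ph: "nsmul p h = k + nsmul m e"
  shows "p dvd m"
proof -
  have pa: "p ^ (a - 1) * p = p ^ a" using e(2) by (cases a) (auto simp: power_Suc2)
  have "nsmul (p ^ (a - 1)) k + nsmul (p ^ (a - 1) * m) e = nsmul (p ^ (a - 1)) (nsmul p h)"
    by (simp only: ph nsmul_add_right nsmul_mult)
  also have "\<dots> = nsmul (p ^ a) h" by (simp only: pa flip: nsmul_mult)
  finally have "nsmul (p ^ (a - 1) * m) e = - nsmul (p ^ (a - 1)) k"
    using h by (simp add: eq_neg_iff_add_eq_0 add.commute)
  moreover have "- nsmul (p ^ (a - 1)) k \<in> K"
    using K(1) k by (intro add_submonoid_minus add_submonoid_nsmul)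
  ultimately have "nsmul (p ^ (a - 1) * m) e = 0"
    by (metis nsmul_eq_0_if_inter_multiples[OF K(2)])
  then have "p ^ (a - 1) * p dvd p ^ (a - 1) * m" using e(1) pa by (simp add: nsmul_eq_0_iff)
  then show "p dvd m" using p by (simp add: dvd_mult_cancel_left)
qed

lemma exists_outside_adjoin_with_multiple_in:
  fixes H K :: "'a::{finite,ab_group_add} set"
  assumes p: "prime p" and H: "add_submonoid H"
    and K: "add_submonoid K" "K \<subseteq> H" "K \<inter> multiples e = {0}"
    and e: "e \<in> H" "add_order e = p ^ a" "a \<ge> 1"
    and kill: "\<forall>h\<in>H. nsmul (p ^ a) h = 0"
    and h: "h \<in> H" "h \<notin> adjoin K e"
  shows "\<exists>h'\<in>H. h' \<notin> adjoin K e \<and> nsmul p h' \<in> K"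
proof -
  let ?C = "adjoin K e"
  have C: "add_submonoid ?C" using K(1) by (rule add_submonoid_adjoin)
  txt \<open>Take the last \<open>h1\<close> among \<open>h, p h, p\<^sup>2 h, \<dots>\<close> outside \<open>?C\<close>, so that
    \<open>p h1 = k0 + m e\<close>; since \<open>p\<close> divides \<open>m\<close>, \<open>h1 - (m div p) e\<close> is the required element.\<close>
  have "nsmul (p ^ a) h \<in> ?C" using kill h(1) add_submonoid_zero[OF C] by simp
  define j where "j = (LEAST j. nsmul (p ^ j) h \<in> ?C)"
  have j: "nsmul (p ^ j) h \<in> ?C" unfolding j_def by (rule LeastI) fact
  have "j \<noteq> 0"
  proof
    assume "j = 0"
    then show False using j h(2) by simp
  qed
  then obtain j' where jj: "j = Suc j'" using not0_implies_Suc by blast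
  define h1 where "h1 = nsmul (p ^ j') h"
  have h1C: "h1 \<notin> ?C"
    using not_less_Least[of j' "\<lambda>j. nsmul (p ^ j) h \<in> ?C"] by (simp add: h1_def j_def[symmetric] jj)
  have h1H: "h1 \<in> H" unfolding h1_def using H h(1) by (rule add_submonoid_nsmul)
  have "nsmul p h1 \<in> ?C" using j by (simp add: h1_def jj nsmul_mult mult.commute)
  then obtain m k0 where k0: "k0 \<in> K" and pm: "nsmul p h1 = k0 + nsmul m e"
    unfolding adjoin_def by blast
  have "p dvd m" using prime_gt_0_nat[OF p] K(1,3) e(2,3) kill h1H k0 pm
    by (intro dvd_coeff_of_p_multiple) auto
  then obtain m' where m': "m = p * m'" by blast
  define h' where "h' = h1 - nsmul m' e"
  have "h' \<in> H" unfolding h'_def using H h1H add_submonoid_nsmul[OF H e(1)] by (rule add_submonoid_diff)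
  moreover have "nsmul p h' = k0"
    by (simp add: h'_def nsmul_diff_right pm m' nsmul_mult[symmetric] mult.commute)
  moreover have "h' \<notin> ?C"
  proof
    assume "h' \<in> ?C"
    then have "h' + nsmul m' e \<in> ?C"
      using add_submonoid_add[OF C] nsmul_in_adjoin[OF add_submonoid_zero[OF K(1)]] by blast
    then show False using h1C by (simp add: h'_def)
  qed
  ultimately show ?thesis using k0 by blast
qed

lemma mem_if_coprime_multiple_mem:
  fixes L :: "'a::{finite,ab_group_add} set"
  assumes p: "prime p" and L: "add_submonoid L" and r: "\<not> p dvd r"
    and mem: "nsmul r h \<in> L" "nsmul p h \<in> L"
  shows "h \<in> L"
proof -
  have "coprime r p" using p r prime_imp_coprime coprime_commute by blast
  then obtain r' where "[r * r' = 1] (mod p)" using cong_solve_coprime_nat by auto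
  then have "(r' * r) mod p = 1"
    using prime_gt_1_nat[OF p] by (simp add: cong_def mult.commute)
  then obtain v where v: "r' * r = 1 + v * p"
    using div_mult_mod_eq[of "r' * r" p] by (metis add.commute)
  have "nsmul r' (nsmul r h) - nsmul v (nsmul p h) \<in> L"
    using L add_submonoid_nsmul[OF L mem(1)] add_submonoid_nsmul[OF L mem(2)]
    by (rule add_submonoid_diff)
  moreover have "nsmul r' (nsmul r h) = h + nsmul v (nsmul p h)"
    by (simp only: nsmul_mult[symmetric] v nsmul_add) (simp add: mult.commute)
  ultimately show "h \<in> L" by simp
qed

lemma adjoin_inter_multiples:
  fixes K :: "'a::{finite,ab_group_add} set"
  assumes p: "prime p" and K: "add_submonoid K" "K \<inter> multiples e = {0}"
    and h: "h \<notin> adjoin K e" "nsmul p h \<in> K"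
  shows "adjoin K h \<inter> multiples e = {0}"
proof (intro equalityI subsetI)
  fix x assume "x \<in> {0::'a}"
  then show "x \<in> adjoin K h \<inter> multiples e"
    using add_submonoid_zero[OF add_submonoid_adjoin[OF K(1)]] nsmul_in_multiples[of 0 e] by simp
next
  fix x assume "x \<in> adjoin K h \<inter> multiples e"
  then obtain k s t where k: "k \<in> K" and xs: "x = k + nsmul s h" and xt: "x = nsmul t e"
    unfolding adjoin_def multiples_def by auto
  define u where "u = nsmul (s div p) (nsmul p h)"
  have u: "u \<in> K" unfolding u_def using K(1) h(2) by (rule add_submonoid_nsmul)
  have "nsmul s h = nsmul (s mod p + s div p * p) h" by simp
  also have "\<dots> = nsmul (s mod p) h + u" by (simp only: nsmul_add nsmul_mult u_def)
  finally have s: "nsmul s h = nsmul (s mod p) h + u" .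
  show "x \<in> {0}"
  proof (cases "s mod p = 0")
    case True
    then have "x \<in> K" using xs s add_submonoid_add[OF K(1) k u] by simp
    then show ?thesis using xt nsmul_eq_0_if_inter_multiples[OF K(2)] by simp
  next
    case False
    have "s mod p < p" using p prime_gt_0_nat by simp
    then have "\<not> p dvd s mod p" using False by (auto dest: dvd_imp_le)
    moreover have "nsmul (s mod p) h = - (k + u) + nsmul t e"
      using xs xt s by (simp add: algebra_simps)
    then have "nsmul (s mod p) h \<in> adjoin K e"
      using add_submonoid_minus[OF K(1) add_submonoid_add[OF K(1) k u]] unfolding adjoin_def by blast
    moreover have "nsmul p h \<in> adjoin K e" using subset_adjoin h(2) by blast
    ultimately have "h \<in> adjoin K e"
      by (rule mem_if_coprime_multiple_mem[OF p add_submonoid_adjoin[OF K(1)]])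
    then show ?thesis using h(1) by blast
  qed
qed

lemma maximal_complement_adjoin:
  fixes H K :: "'a::{finite,ab_group_add} set"
  assumes p: "prime p" and H: "add_submonoid H"
    and K: "add_submonoid K" "K \<subseteq> H" "K \<inter> multiples e = {0}"
    and K_max: "\<And>K'. K' \<subseteq> H \<Longrightarrow> add_submonoid K' \<Longrightarrow> K' \<inter> multiples e = {0} \<Longrightarrow> card K' \<le> card K"
    and e: "e \<in> H" "add_order e = p ^ a" "a \<ge> 1"
    and kill: "\<forall>h\<in>H. nsmul (p ^ a) h = 0"
  shows "H \<subseteq> adjoin K e"
proof
  fix h assume h: "h \<in> H"
  show "h \<in> adjoin K e"
  proof (rule ccontr)
    assume "h \<notin> adjoin K e"
    then obtain h' where h': "h' \<in> H" "h' \<notin> adjoin K e" "nsmul p h' \<in> K"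
      using exists_outside_adjoin_with_multiple_in[OF p H K e kill h] by blast
    have "adjoin K h' \<subseteq> H" using H K(2) h'(1) by (rule adjoin_subset)
    moreover have "add_submonoid (adjoin K h')" using K(1) by (rule add_submonoid_adjoin)
    moreover have "adjoin K h' \<inter> multiples e = {0}"
      using p K(1,3) h'(2,3) by (rule adjoin_inter_multiples)
    ultimately have "card (adjoin K h') \<le> card K" by (rule K_max)
    moreover have "h' \<in> adjoin K h'"
      using nsmul_in_adjoin[OF add_submonoid_zero[OF K(1)], of 1 h'] by simp
    moreover have "h' \<notin> K" using h'(2) subset_adjoin by blast
    ultimately have "K \<subset> adjoin K h'" using subset_adjoin by blast
    then have "card K < card (adjoin K h')" by (rule psubset_card_mono[OF finite])
    then show False using \<open>card (adjoin K h') \<le> card K\<close> by simp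
  qed
qed

lemma add_eq_0_inter_multiples:
  fixes K :: "'a::{finite,ab_group_add} set"
  assumes K: "add_submonoid K" "K \<inter> multiples g = {0}"
    and k: "k \<in> K" and sum0: "nsmul c g + k = 0" and c: "c < add_order g"
  shows "c = 0 \<and> k = 0"
proof -
  have "nsmul c g = - k" using sum0 by (simp add: eq_neg_iff_add_eq_0)
  moreover have "- k \<in> K" using K(1) k by (rule add_submonoid_minus)
  ultimately have cg: "nsmul c g = 0" by (metis nsmul_eq_0_if_inter_multiples[OF K(2)])
  then have "add_order g dvd c" by (simp add: nsmul_eq_0_iff)
  then have "c = 0" using c dvd_imp_le not_le by blast
  moreover have "k = 0" using sum0 cg by simp
  ultimately show ?thesis ..
qed

text \<open>\<open>H\<close> is the direct sum of the cyclic subgroups generated by \<open>e 0, \<dots>, e (r - 1)\<close>,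
  and \<open>q j\<close> is a power of \<open>p\<close>; independence forces \<open>q j\<close> to be the order of \<open>e j\<close>.\<close>

definition p_basis :: "nat \<Rightarrow> 'a::comm_monoid_add set \<Rightarrow> nat \<Rightarrow> (nat \<Rightarrow> 'a) \<Rightarrow> (nat \<Rightarrow> nat) \<Rightarrow> bool" where
  "p_basis p H r e q \<longleftrightarrow>
     (\<forall>j<r. e j \<in> H \<and> (\<exists>a. q j = p ^ a) \<and> nsmul (q j) (e j) = 0) \<and>
     (\<forall>h\<in>H. \<exists>c. h = (\<Sum>j<r. nsmul (c j) (e j))) \<and>
     (\<forall>c. (\<forall>j<r. c j < q j) \<longrightarrow> (\<Sum>j<r. nsmul (c j) (e j)) = 0 \<longrightarrow> (\<forall>j<r. c j = 0))"

lemma p_basis_elements: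
  "p_basis p H r e q \<Longrightarrow> j < r \<Longrightarrow> e j \<in> H \<and> (\<exists>a. q j = p ^ a) \<and> nsmul (q j) (e j) = 0"
  by (simp add: p_basis_def)

lemma p_basis_spans: "p_basis p H r e q \<Longrightarrow> h \<in> H \<Longrightarrow> \<exists>c. h = (\<Sum>j<r. nsmul (c j) (e j))"
  by (simp add: p_basis_def)

lemma p_basis_independent:
  "p_basis p H r e q \<Longrightarrow> \<forall>j<r. c j < q j \<Longrightarrow> (\<Sum>j<r. nsmul (c j) (e j)) = 0 \<Longrightarrow> j < r \<Longrightarrow> c j = 0"
  by (simp add: p_basis_def)

lemma p_basis_extend:
  fixes H K :: "'a::{finite,ab_group_add} set"
  assumes B: "p_basis p K r e q" and K: "add_submonoid K" "K \<inter> multiples g = {0}"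
    and H: "K \<subseteq> H" "H \<subseteq> adjoin K g" and g: "g \<in> H" "add_order g = p ^ a"
  shows "p_basis p H (Suc r) (case_nat g e) (case_nat (p ^ a) q)"
proof -
  let ?E = "case_nat g e" and ?Q = "case_nat (p ^ a) q"
  have sum_E: "(\<Sum>j<Suc r. nsmul (c j) (?E j)) = nsmul (c 0) g + (\<Sum>j<r. nsmul (c (Suc j)) (e j))"
    for c
    unfolding sum.lessThan_Suc_shift by simp
  have "e j \<in> H \<and> (\<exists>a. q j = p ^ a) \<and> nsmul (q j) (e j) = 0" if "j < r" for j
    using p_basis_elements[OF B that] H(1) by blast
  moreover have "nsmul (p ^ a) g = 0" using add_order_pos_nsmul[of g] g(2) by simp
  ultimately have gens: "\<forall>j<Suc r. ?E j \<in> H \<and> (\<exists>a. ?Q j = p ^ a) \<and> nsmul (?Q j) (?E j) = 0"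
    using g(1) by (auto split: nat.split)
  have span: "\<forall>h\<in>H. \<exists>c. h = (\<Sum>j<Suc r. nsmul (c j) (?E j))"
  proof
    fix h assume "h \<in> H"
    then obtain k t where k: "k \<in> K" and h: "h = k + nsmul t g"
      using H(2) unfolding adjoin_def by blast
    obtain c where "k = (\<Sum>j<r. nsmul (c j) (e j))" using p_basis_spans[OF B k] by blast
    then have "h = (\<Sum>j<Suc r. nsmul (case_nat t c j) (?E j))"
      unfolding sum_E h by (simp add: add.commute)
    then show "\<exists>c. h = (\<Sum>j<Suc r. nsmul (c j) (?E j))" by blast
  qed
  have indep: "\<forall>c. (\<forall>j<Suc r. c j < ?Q j) \<longrightarrow> (\<Sum>j<Suc r. nsmul (c j) (?E j)) = 0 \<longrightarrow>
    (\<forall>j<Suc r. c j = 0)"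
  proof (intro allI impI)
    fix c j
    assume c: "\<forall>j<Suc r. c j < ?Q j" and sum0: "(\<Sum>j<Suc r. nsmul (c j) (?E j)) = 0"
      and j: "j < Suc r"
    define k where "k = (\<Sum>j<r. nsmul (c (Suc j)) (e j))"
    have "k \<in> K" unfolding k_def
      using K(1) p_basis_elements[OF B] by (intro add_submonoid_sum add_submonoid_nsmul) auto
    moreover have "nsmul (c 0) g + k = 0" using sum0 unfolding sum_E k_def .
    moreover have "c 0 < add_order g" using c g(2) by auto
    ultimately have c0: "c 0 = 0" and sum_tail: "(\<Sum>j<r. nsmul (c (Suc j)) (e j)) = 0"
      using add_eq_0_inter_multiples[OF K] by (auto simp: k_def)
    have bound_tail: "\<forall>j<r. c (Suc j) < q j" using c by auto
    show "c j = 0"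
    proof (cases j)
      case (Suc j')
      then show ?thesis using p_basis_independent[OF B bound_tail sum_tail] j by simp
    qed (use c0 in simp)
  qed
  show ?thesis unfolding p_basis_def using gens span indep by (intro conjI)
qed

lemma exists_element_of_maximal_order:
  fixes H :: "'a::{finite,ab_group_add} set"
  assumes p: "prime p" and card: "card (UNIV :: 'a set) = p ^ k" and h: "h \<in> H" "h \<noteq> 0"
  obtains g a where "g \<in> H" "add_order g = p ^ a" "a \<ge> 1" "\<forall>h\<in>H. nsmul (p ^ a) h = 0"
proof -
  have "Max (add_order ` H) \<in> add_order ` H" using h(1) by (intro Max_in) auto
  then obtain g where g: "g \<in> H" and g_Max: "add_order g = Max (add_order ` H)"
    by (metis imageE)
  have g_max: "add_order h \<le> add_order g" if "h \<in> H" for h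
    unfolding g_Max using that by (intro Max_ge) auto
  obtain a where a: "add_order g = p ^ a" using add_order_prime_power[OF p card] by blast
  have "add_order h \<noteq> 1" using h(2) add_order_eq_1_iff by blast
  then have "p ^ a \<noteq> 1" using g_max[OF h(1)] add_order_pos_nsmul[of h] a by linarith
  then have "a \<ge> 1" by (cases a) auto
  moreover have "nsmul (p ^ a) h' = 0" if "h' \<in> H" for h'
  proof -
    obtain b where b: "add_order h' = p ^ b" using add_order_prime_power[OF p card] by blast
    then have "p ^ b \<le> p ^ a" using g_max[OF that] a by simp
    then have "b \<le> a" using p prime_gt_1_nat power_le_imp_le_exp by blast
    then show ?thesis using b by (simp add: nsmul_eq_0_iff le_imp_power_dvd)
  qed
  ultimately show ?thesis using that g a by blast
qed

lemma exists_maximal_complement: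
  fixes H :: "'a::{finite,ab_group_add} set"
  assumes "add_submonoid H"
  obtains K where "add_submonoid K" "K \<subseteq> H" "K \<inter> multiples g = {0}"
    "\<And>K'. K' \<subseteq> H \<Longrightarrow> add_submonoid K' \<Longrightarrow> K' \<inter> multiples g = {0} \<Longrightarrow> card K' \<le> card K"
proof -
  define P where "P K \<longleftrightarrow> add_submonoid K \<and> K \<subseteq> H \<and> K \<inter> multiples g = {0}" for K
  have "{0} \<inter> multiples g = {0}" using nsmul_in_multiples[of 0 g] by auto
  then have "P {0}" using add_submonoid_zero[OF assms] by (simp add: P_def add_submonoid_def)
  moreover have "\<forall>K. P K \<longrightarrow> card K < Suc (card (UNIV :: 'a set))"
    by (simp add: card_mono less_Suc_eq_le)
  ultimately obtain K where K: "P K" and K_max: "\<forall>K'. P K' \<longrightarrow> card K' \<le> card K"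
    using Lattices_Big.ex_has_greatest_nat[of P "{0}" card] by blast
  show ?thesis
  proof (rule that)
    show "add_submonoid K" "K \<subseteq> H" "K \<inter> multiples g = {0}" using K unfolding P_def by blast+
    fix K' assume "K' \<subseteq> H" "add_submonoid K'" "K' \<inter> multiples g = {0}"
    then show "card K' \<le> card K" using K_max unfolding P_def by blast
  qed
qed

text \<open>Split off the cyclic subgroup generated by an element of maximal order, which has a
  complement by \<open>maximal_complement_adjoin\<close>, and induct on the complement.\<close>

theorem exists_p_basis:
  fixes H :: "'a::{finite,ab_group_add} set"
  assumes p: "prime p" and card: "card (UNIV :: 'a set) = p ^ k"
  shows "add_submonoid H \<Longrightarrow> \<exists>r e q. p_basis p H r e q"
proof (induction "card H" arbitrary: H rule: less_induct)
  case less
  show ?case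
  proof (cases "H \<subseteq> {0}")
    case True
    then have "p_basis p H 0 e q" for e q by (auto simp: p_basis_def)
    then show ?thesis by blast
  next
    case False
    then obtain h where "h \<in> H" "h \<noteq> 0" by blast
    then obtain g a where g: "g \<in> H" "add_order g = p ^ a" "a \<ge> 1"
      and kill: "\<forall>h\<in>H. nsmul (p ^ a) h = 0"
      using exists_element_of_maximal_order[OF p card] by metis
    obtain K where K: "add_submonoid K" "K \<subseteq> H" "K \<inter> multiples g = {0}"
      and K_max: "\<And>K'. K' \<subseteq> H \<Longrightarrow> add_submonoid K' \<Longrightarrow> K' \<inter> multiples g = {0} \<Longrightarrow> card K' \<le> card K"
      using exists_maximal_complement[OF less.prems] by metis
    have "1 < add_order g" using g(2,3) one_less_power[OF prime_gt_1_nat[OF p]] by simp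
    then have "g \<notin> K" using nsmul_eq_0_if_inter_multiples[OF K(3), of 1] add_order_eq_1_iff[of g]
      by auto
    then have "K \<subset> H" using K(2) g(1) by blast
    then have "card K < card H" by (rule psubset_card_mono[OF finite])
    then obtain r e q where "p_basis p K r e q" using less.hyps K(1) by blast
    moreover have "H \<subseteq> adjoin K g"
      using p less.prems K K_max g kill by (rule maximal_complement_adjoin)
    ultimately have "p_basis p H (Suc r) (case_nat g e) (case_nat (p ^ a) q)"
      using p_basis_extend[OF _ K(1,3) K(2) _ g(1,2)] by blast
    then show ?thesis by blast
  qed
qed

section \<open>Olson's theorem via the integral group ring\<close>

lemma prime_dvd_add_power_sub:
  fixes x y :: "'r::comm_ring_1"
  assumes p: "prime p"
  shows "of_nat p dvd (x + y) ^ p - x ^ p - y ^ p"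
proof -
  have "(x + y) ^ p = (\<Sum>k\<le>p. of_nat (p choose k) * x ^ k * y ^ (p - k))"
    by (rule binomial_ring)
  also have "\<dots> = (\<Sum>k\<in>{1..<p}. of_nat (p choose k) * x ^ k * y ^ (p - k)) + x ^ p + y ^ p"
  proof -
    have "{..p} = insert 0 (insert p {1..<p})" using prime_gt_0_nat[OF p] by auto
    then show ?thesis using prime_gt_0_nat[OF p] by (simp add: algebra_simps)
  qed
  finally have "(x + y) ^ p - x ^ p - y ^ p = (\<Sum>k\<in>{1..<p}. of_nat (p choose k) * x ^ k * y ^ (p - k))"
    by simp
  also have "of_nat p dvd \<dots>"
  proof (rule dvd_sum)
    fix k assume "k \<in> {1..<p}"
    then have "p dvd p choose k" using p by (intro dvd_choose_prime) auto
    then obtain t where "p choose k = p * t" by blast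
    then show "of_nat p dvd of_nat (p choose k) * x ^ k * y ^ (p - k)"
      by (intro dvd_mult2) simp
  qed
  finally show ?thesis .
qed

lemma prime_dvd_minus_power_add_power:
  fixes y :: "'r::comm_ring_1"
  assumes p: "prime p"
  shows "of_nat p dvd (- y) ^ p + y ^ p"
proof (cases "odd p")
  case True
  then show ?thesis by (simp add: power_minus_odd)
next
  case False
  then have "\<not> p > 2" using prime_odd_nat[OF p] by blast
  then have "p = 2" using prime_ge_2_nat[OF p] by simp
  then show ?thesis by (simp add: power2_eq_square)
qed

lemma prime_dvd_one_minus_power_prime:
  fixes y :: "'r::comm_ring_1"
  assumes p: "prime p"
  shows "of_nat p dvd (1 - y) ^ p - (1 - y ^ p)"
proof -
  have "(1 - y) ^ p - (1 - y ^ p) = ((1 + - y) ^ p - 1 ^ p - (- y) ^ p) + ((- y) ^ p + y ^ p)"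
    by simp
  then show ?thesis
    using prime_dvd_add_power_sub[OF p, of 1 "- y"] prime_dvd_minus_power_add_power[OF p, of y]
    by (metis dvd_add)
qed

lemma dvd_power_diff:
  fixes u v :: "'r::comm_ring_1"
  assumes "d dvd u - v"
  shows "d dvd u ^ n - v ^ n"
  using assms by (simp add: power_diff_sumr2)

lemma prime_dvd_one_minus_power_prime_power:
  fixes y :: "'r::comm_ring_1"
  assumes p: "prime p"
  shows "of_nat p dvd (1 - y) ^ (p ^ a) - (1 - y ^ (p ^ a))"
proof (induction a)
  case (Suc a)
  let ?u = "(1 - y) ^ (p ^ a)" and ?v = "1 - y ^ (p ^ a)"
  have "of_nat p dvd ?u ^ p - ?v ^ p" using Suc by (rule dvd_power_diff)
  moreover have "of_nat p dvd ?v ^ p - (1 - (y ^ (p ^ a)) ^ p)"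
    by (rule prime_dvd_one_minus_power_prime[OF p])
  ultimately have "of_nat p dvd (?u ^ p - ?v ^ p) + (?v ^ p - (1 - (y ^ (p ^ a)) ^ p))"
    by (rule dvd_add)
  moreover have "(1 - y) ^ (p ^ Suc a) = ?u ^ p" "y ^ (p ^ Suc a) = (y ^ (p ^ a)) ^ p"
    by (simp_all only: power_Suc2 power_mult)
  ultimately show ?case by (simp add: diff_diff_eq2 add_diff_eq)
qed simp

text \<open>The integral group ring of \<open>G\<close> is \<open>G \<Rightarrow>\<^sub>0 int\<close> with the convolution product;
  \<open>X g\<close> is the basis element of \<open>g\<close>.\<close>

abbreviation X :: "'a::comm_monoid_add \<Rightarrow> 'a \<Rightarrow>\<^sub>0 int" where
  "X g \<equiv> Poly_Mapping.single g 1"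

lemma X_add: "X (g + h) = X g * X h"
  by (simp add: mult_single)

lemma X_nsmul: "X (nsmul n g) = X g ^ n"
  by (induction n) (auto simp: X_add)

lemma one_minus_X_sum_nsmul:
  fixes e :: "nat \<Rightarrow> 'a::comm_monoid_add"
  shows "\<exists>u. 1 - X (\<Sum>j<r. nsmul (c j) (e j)) = (\<Sum>j<r. (1 - X (e j)) * u j)"
proof (induction r)
  case (Suc r)
  obtain u where u: "1 - X (\<Sum>j<r. nsmul (c j) (e j)) = (\<Sum>j<r. (1 - X (e j)) * u j)"
    using Suc.IH by blast
  let ?a = "\<Sum>j<r. nsmul (c j) (e j)"
  define w where "w = X ?a * (\<Sum>k<c r. X (e r) ^ k)"
  have "1 - X (\<Sum>j<Suc r. nsmul (c j) (e j)) = (1 - X ?a) + X ?a * (1 - X (nsmul (c r) (e r)))"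
    by (simp add: X_add algebra_simps)
  also have "\<dots> = (\<Sum>j<r. (1 - X (e j)) * u j) + (1 - X (e r)) * w"
    by (simp add: u w_def X_nsmul one_diff_power_eq algebra_simps)
  also have "\<dots> = (\<Sum>j<Suc r. (1 - X (e j)) * (u(r := w)) j)"
    by simp
  finally show ?case by blast
qed simp

lemma lookup_of_nat_mult: "Poly_Mapping.lookup (of_nat n * z) h = int n * Poly_Mapping.lookup z h"
  by (induction n) (auto simp: distrib_right Poly_Mapping.lookup_add)

lemma dvd_lookup_if_of_nat_dvd:
  assumes "(of_nat p :: 'a::comm_monoid_add \<Rightarrow>\<^sub>0 int) dvd z"
  shows "int p dvd Poly_Mapping.lookup z h"
  using assms by (auto simp: lookup_of_nat_mult)

lemma prod_minus_X:
  "finite J \<Longrightarrow> (\<Prod>i\<in>J. - X (g i)) = Poly_Mapping.single (sum g J) ((-1) ^ card J)"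
proof (induction J rule: finite_induct)
  case (insert x J)
  have "- X (g x) * Poly_Mapping.single (sum g J) ((-1) ^ card J)
      = Poly_Mapping.single (g x + sum g J) ((-1) ^ Suc (card J))"
    by (simp add: mult_single flip: single_uminus)
  then show ?case using insert by simp
qed simp

lemma lookup_prod_one_minus_X:
  fixes g :: "'b \<Rightarrow> 'a::comm_monoid_add"
  assumes fin: "finite I"
  shows "Poly_Mapping.lookup (\<Prod>i\<in>I. (1 - X (g i))) h = (\<Sum>J\<in>{J\<in>Pow I. sum g J = h}. (-1) ^ card J)"
proof -
  have "(\<Prod>i\<in>I. (1 - X (g i))) = (\<Prod>i\<in>I. (- X (g i)) + 1)" by simp
  also have "\<dots> = (\<Sum>J\<in>Pow I. (\<Prod>i\<in>J. - X (g i)) * (\<Prod>i\<in>I - J. 1))"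
    by (rule prod_add[OF fin])
  also have "\<dots> = (\<Sum>J\<in>Pow I. Poly_Mapping.single (sum g J) ((-1) ^ card J))"
    using fin by (intro sum.cong) (auto simp: prod_minus_X finite_subset)
  finally have "Poly_Mapping.lookup (\<Prod>i\<in>I. (1 - X (g i))) h
      = (\<Sum>J\<in>Pow I. if sum g J = h then (-1) ^ card J else 0)"
    by (simp add: Poly_Mapping.lookup_sum Poly_Mapping.lookup_single when_def)
  also have "\<dots> = (\<Sum>J\<in>{J\<in>Pow I. sum g J = h}. (-1) ^ card J)"
    by (rule sum.inter_filter[symmetric]) (use fin in simp)
  finally show ?thesis .
qed

lemma pigeonhole_fibre:
  fixes f :: "'b \<Rightarrow> nat"
  assumes fin: "finite I" and f: "\<forall>i\<in>I. f i < r"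
    and big: "card I \<ge> 1 + (\<Sum>j<r. q j - 1)"
  shows "\<exists>j<r. q j \<le> card {i\<in>I. f i = j}"
proof (rule ccontr)
  assume "\<not> ?thesis"
  then have small: "\<forall>j<r. card {i\<in>I. f i = j} \<le> q j - 1" by auto
  have "card I = card (\<Union>j<r. {i\<in>I. f i = j})" using f by (intro arg_cong[where f = card]) auto
  also have "\<dots> = (\<Sum>j<r. card {i\<in>I. f i = j})" using fin by (intro card_UN_disjoint) auto
  also have "\<dots> \<le> (\<Sum>j<r. q j - 1)" using small by (intro sum_mono) auto
  finally show False using big by simp
qed

lemma prime_dvd_one_minus_X_power_order:
  assumes p: "prime p" and B: "p_basis p H r e q" and j: "j < r"
  shows "(of_nat p :: 'a::comm_monoid_add \<Rightarrow>\<^sub>0 int) dvd (1 - X (e j)) ^ q j"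
proof -
  obtain a where a: "q j = p ^ a" and "nsmul (q j) (e j) = 0" using p_basis_elements[OF B j] by blast
  then have "X (e j) ^ q j = 1" by (simp flip: X_nsmul)
  then show ?thesis using prime_dvd_one_minus_power_prime_power[OF p, of "X (e j)" a] a by simp
qed

text \<open>Olson's argument: each factor \<open>1 - X (g i)\<close> lies in the ideal generated by the
  \<open>1 - X (e j)\<close>, and in every term of the expanded product some generator occurs at least
  \<open>q j\<close> times, which makes the term divisible by \<open>p\<close>.\<close>

lemma prime_dvd_prod_one_minus_X:
  fixes g :: "'b \<Rightarrow> 'a::{finite,ab_group_add}" and e :: "nat \<Rightarrow> 'a"
  assumes p: "prime p" and B: "p_basis p UNIV r e q" and fin: "finite I"
    and big: "card I \<ge> 1 + (\<Sum>j<r. q j - 1)"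
  shows "(of_nat p :: 'a \<Rightarrow>\<^sub>0 int) dvd (\<Prod>i\<in>I. (1 - X (g i)))"
proof -
  have "\<forall>i. \<exists>u. 1 - X (g i) = (\<Sum>j<r. (1 - X (e j)) * u j)"
  proof
    fix i
    obtain c where "g i = (\<Sum>j<r. nsmul (c j) (e j))" using p_basis_spans[OF B] by blast
    then show "\<exists>u. 1 - X (g i) = (\<Sum>j<r. (1 - X (e j)) * u j)"
      using one_minus_X_sum_nsmul[of c e r] by simp
  qed
  then obtain U where U: "\<forall>i. 1 - X (g i) = (\<Sum>j<r. (1 - X (e j)) * U i j)"
    by (rule choice_iff[THEN iffD1, THEN exE])
  have "(\<Prod>i\<in>I. (1 - X (g i))) = (\<Prod>i\<in>I. \<Sum>j<r. (1 - X (e j)) * U i j)"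
    by (simp add: U)
  also have "\<dots> = (\<Sum>f\<in>PiE I (\<lambda>_. {..<r}). \<Prod>i\<in>I. (1 - X (e (f i))) * U i (f i))"
    using fin by (rule prod_sum_PiE) simp
  also have "of_nat p dvd \<dots>"
  proof (rule dvd_sum)
    fix f assume "f \<in> PiE I (\<lambda>_. {..<r})"
    then obtain j where j: "j < r" "q j \<le> card {i\<in>I. f i = j}"
      using pigeonhole_fibre[OF fin _ big] by blast
    define Ij where "Ij = {i\<in>I. f i = j}"
    have "(\<Prod>i\<in>I. (1 - X (e (f i))) * U i (f i))
        = (\<Prod>i\<in>I - Ij. 1 - X (e (f i))) * (\<Prod>i\<in>Ij. 1 - X (e (f i))) * (\<Prod>i\<in>I. U i (f i))"
      using fin by (simp add: prod.distrib prod.subset_diff[of Ij I] Ij_def)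
    also have "(\<Prod>i\<in>Ij. 1 - X (e (f i))) = (1 - X (e j)) ^ q j * (1 - X (e j)) ^ (card Ij - q j)"
      using j(2) by (simp add: Ij_def flip: power_add)
    finally show "of_nat p dvd (\<Prod>i\<in>I. (1 - X (e (f i))) * U i (f i))"
      using prime_dvd_one_minus_X_power_order[OF p B j(1)] by simp
  qed
  finally show ?thesis .
qed

theorem prime_dvd_signed_count_subsets:
  fixes g :: "'b \<Rightarrow> 'a::{finite,ab_group_add}" and e :: "nat \<Rightarrow> 'a"
  assumes p: "prime p" and B: "p_basis p UNIV r e q" and fin: "finite I"
    and big: "card I \<ge> 1 + (\<Sum>j<r. q j - 1)"
  shows "int p dvd (\<Sum>J\<in>{J\<in>Pow I. sum g J = h}. (-1) ^ card J)"
  using dvd_lookup_if_of_nat_dvd[OF prime_dvd_prod_one_minus_X[OF p B fin big, of g], of h]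
  by (simp add: lookup_prod_one_minus_X[OF fin])

section \<open>Zero-sum subsequences with restricted lengths\<close>

lemma signed_count_supersets:
  fixes s :: "'b \<Rightarrow> 'a::ab_group_add"
  assumes fin: "finite I" and U: "U \<subseteq> I"
  shows "(\<Sum>J\<in>{J\<in>Pow I. sum s J = 0 \<and> U \<subseteq> J}. (-1::int) ^ card J)
       = (-1) ^ card U * (\<Sum>J\<in>{J\<in>Pow (I - U). sum s J = - sum s U}. (-1) ^ card J)"
proof -
  have finU: "finite U" using fin U by (rule finite_subset[rotated])
  have "(\<Sum>J\<in>{J\<in>Pow I. sum s J = 0 \<and> U \<subseteq> J}. (-1::int) ^ card J)
      = (\<Sum>J\<in>{J\<in>Pow (I - U). sum s J = - sum s U}. (-1) ^ card U * (-1) ^ card J)"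
  proof (rule sum.reindex_bij_witness[of _ "\<lambda>J. U \<union> J" "\<lambda>J. J - U"])
    fix J assume J: "J \<in> {J\<in>Pow I. sum s J = 0 \<and> U \<subseteq> J}"
    then have finJ: "finite J" using fin finite_subset by auto
    have decomp: "sum s J = sum s (J - U) + sum s U" "card J = card U + card (J - U)"
      using J finJ by (auto simp: sum.subset_diff card_Diff_subset card_mono finU)
    show "U \<union> (J - U) = J" using J by auto
    show "J - U \<in> {J\<in>Pow (I - U). sum s J = - sum s U}"
      using J decomp(1) by (auto simp: eq_neg_iff_add_eq_0)
    show "(-1) ^ card U * (-1) ^ card (J - U) = (-1::int) ^ card J"
      by (simp add: decomp(2) power_add)
  next
    fix J assume J: "J \<in> {J\<in>Pow (I - U). sum s J = - sum s U}"
    then have "finite J" using fin finite_subset by auto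
    then have "sum s (U \<union> J) = sum s U + sum s J"
      using J finU by (intro sum.union_disjoint) auto
    then show "U \<union> J \<in> {J\<in>Pow I. sum s J = 0 \<and> U \<subseteq> J}" using J U by auto
    show "U \<union> J - U = J" using J by auto
  qed
  then show ?thesis by (simp add: sum_distrib_left)
qed

lemma prime_dvd_signed_count_binomial:
  fixes s :: "'b \<Rightarrow> 'a::{finite,ab_group_add}" and e :: "nat \<Rightarrow> 'a"
  assumes p: "prime p" and B: "p_basis p UNIV r e q" and fin: "finite I"
    and big: "card I \<ge> 1 + (\<Sum>j<r. q j - 1) + m"
  shows "int p dvd (\<Sum>J\<in>{J\<in>Pow I. sum s J = 0}. (-1) ^ card J * int (card J choose m))"
proof -
  let ?Z = "{J\<in>Pow I. sum s J = 0}" and ?Um = "{U. U \<subseteq> I \<and> card U = m}"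
  txt \<open>Count the pairs \<open>U \<subseteq> J\<close> with \<open>card U = m\<close> in the other order.\<close>
  have "(\<Sum>J\<in>?Z. (-1) ^ card J * int (card J choose m)) = (\<Sum>J\<in>?Z. \<Sum>U\<in>{U\<in>?Um. U \<subseteq> J}. (-1) ^ card J)"
  proof (rule sum.cong)
    fix J assume "J \<in> ?Z"
    then have "{U\<in>?Um. U \<subseteq> J} = {U. U \<subseteq> J \<and> card U = m}" "finite J"
      using fin finite_subset by auto
    then show "(-1) ^ card J * int (card J choose m) = (\<Sum>U\<in>{U\<in>?Um. U \<subseteq> J}. (-1) ^ card J)"
      by (simp add: n_subsets)
  qed simp
  also have "\<dots> = (\<Sum>U\<in>?Um. \<Sum>J\<in>{J\<in>?Z. U \<subseteq> J}. (-1) ^ card J)"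
    using fin by (intro sum.swap_restrict) auto
  also have "int p dvd \<dots>"
  proof (rule dvd_sum)
    fix U assume U: "U \<in> ?Um"
    then have "card (I - U) \<ge> 1 + (\<Sum>j<r. q j - 1)"
      using big fin by (auto simp: card_Diff_subset finite_subset)
    then have "int p dvd (\<Sum>J\<in>{J\<in>Pow (I - U). sum s J = - sum s U}. (-1) ^ card J)"
      using fin by (intro prime_dvd_signed_count_subsets[OF p B]) auto
    moreover have "{J\<in>?Z. U \<subseteq> J} = {J\<in>Pow I. sum s J = 0 \<and> U \<subseteq> J}" by auto
    ultimately show "int p dvd (\<Sum>J\<in>{J\<in>?Z. U \<subseteq> J}. (-1) ^ card J)"
      using signed_count_supersets[OF fin, of U s] U by simp
  qed
  finally show ?thesis .
qed

lemma int_times_choose: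
  "int k * int (k choose m) = int (Suc m) * int (k choose Suc m) + int m * int (k choose m)"
proof (cases "m \<le> k")
  case True
  have "int (k - m) * int (k choose m) = int (Suc m) * int (k choose Suc m)"
    by (simp only: binomial_absorption binomial_absorb_comp flip: of_nat_mult)
  then show ?thesis using True by (simp add: of_nat_diff algebra_simps)
qed (simp add: binomial_eq_0)

lemma prod_diff_binomial_expansion:
  "finite A \<Longrightarrow> \<exists>c. \<forall>k. (\<Prod>b\<in>A. (int k - int b)) = (\<Sum>m\<le>card A. c m * int (k choose m))"
proof (induction A rule: finite_induct)
  case empty
  show ?case by (intro exI[of _ "\<lambda>_. 1"]) simp
next
  case (insert b A)
  obtain c where c: "\<forall>k. (\<Prod>b\<in>A. (int k - int b)) = (\<Sum>m\<le>card A. c m * int (k choose m))"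
    using insert.IH by blast
  define d where "d = card A"
  define c' where "c' m = (if m = 0 then 0 else c (m - 1) * int m)
    + (if m \<le> d then c m * (int m - int b) else 0)" for m
  have "(\<Prod>b\<in>insert b A. (int k - int b)) = (\<Sum>m\<le>Suc d. c' m * int (k choose m))" for k
  proof -
    define h1 where "h1 m = (if m = 0 then 0 else c (m - 1) * int m) * int (k choose m)" for m
    define h2 where "h2 m = (if m \<le> d then c m * (int m - int b) else 0) * int (k choose m)" for m
    have "(\<Prod>b\<in>insert b A. (int k - int b)) = (\<Sum>m\<le>d. (int k - int b) * (c m * int (k choose m)))"
      using insert.hyps c by (simp add: d_def sum_distrib_left)
    also have "\<dots> = (\<Sum>m\<le>d. h1 (Suc m) + h2 m)"
      by (rule sum.cong) (simp_all add: h1_def h2_def int_times_choose algebra_simps)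
    also have "\<dots> = (\<Sum>m\<le>d. h1 (Suc m)) + (\<Sum>m\<le>d. h2 m)" by (rule sum.distrib)
    also have "(\<Sum>m\<le>d. h1 (Suc m)) = (\<Sum>m\<le>Suc d. h1 m)"
      by (subst sum.atMost_Suc_shift) (simp add: h1_def)
    also have "(\<Sum>m\<le>d. h2 m) = (\<Sum>m\<le>Suc d. h2 m)"
      by (subst sum.atMost_Suc) (simp add: h2_def)
    also have "(\<Sum>m\<le>Suc d. h1 m) + (\<Sum>m\<le>Suc d. h2 m) = (\<Sum>m\<le>Suc d. c' m * int (k choose m))"
      unfolding sum.distrib[symmetric] by (rule sum.cong) (simp_all add: h1_def h2_def c'_def algebra_simps)
    finally show ?thesis .
  qed
  then show ?case using insert.hyps by (auto simp: d_def)
qed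

theorem exists_zero_sum_subset_avoiding_residues:
  fixes s :: "'b \<Rightarrow> 'a::{finite,ab_group_add}" and e :: "nat \<Rightarrow> 'a"
  assumes p: "prime p" and B: "p_basis p UNIV r e q" and fin: "finite I"
    and A: "A \<subseteq> {1..p - 1}" and big: "card I \<ge> 1 + (\<Sum>j<r. q j - 1) + card A"
  shows "\<exists>J\<subseteq>I. J \<noteq> {} \<and> sum s J = 0 \<and> (\<forall>b\<in>A. \<not> [card J = b] (mod p))"
proof (rule ccontr)
  assume contra: "\<not> ?thesis"
  have finA: "finite A" using A finite_subset by blast
  define Q where "Q k = (\<Prod>b\<in>A. (int k - int b))" for k
  let ?Z = "{J\<in>Pow I. sum s J = 0}"
  obtain c where c: "\<And>k. Q k = (\<Sum>m\<le>card A. c m * int (k choose m))"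
    using prod_diff_binomial_expansion[OF finA] unfolding Q_def by blast
  have "(\<Sum>J\<in>?Z. (-1) ^ card J * Q (card J))
      = (\<Sum>m\<le>card A. c m * (\<Sum>J\<in>?Z. (-1) ^ card J * int (card J choose m)))"
    by (simp add: c sum_distrib_left sum_distrib_right mult_ac flip: sum.swap[of _ "{..card A}"])
  also have "int p dvd \<dots>"
    using big fin by (intro dvd_sum dvd_mult prime_dvd_signed_count_binomial[OF p B]) auto
  also have "(\<Sum>J\<in>?Z. (-1) ^ card J * Q (card J)) = Q 0 + (\<Sum>J\<in>?Z - {{}}. (-1) ^ card J * Q (card J))"
    using fin by (subst sum.remove[of _ "{}"]) auto
  finally have dvd_total: "int p dvd Q 0 + (\<Sum>J\<in>?Z - {{}}. (-1) ^ card J * Q (card J))" .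
  txt \<open>Every nonempty zero-sum subset contributes a multiple of \<open>p\<close>, so \<open>p\<close> divides the
    contribution \<open>Q 0\<close> of the empty set.\<close>
  have "int p dvd (-1) ^ card J * Q (card J)" if J: "J \<in> ?Z - {{}}" for J
  proof -
    have "\<exists>b\<in>A. [card J = b] (mod p)" using contra J by auto
    then obtain b where b: "b \<in> A" "[card J = b] (mod p)" by blast
    then have "[int (card J) = int b] (mod int p)" by (simp add: cong_int_iff)
    then have "int p dvd int (card J) - int b" by (simp add: cong_iff_dvd_diff)
    also have "\<dots> dvd Q (card J)" unfolding Q_def using finA b(1) by (rule dvd_prodI)
    finally show ?thesis by (rule dvd_mult)
  qed
  then have "int p dvd (\<Sum>J\<in>?Z - {{}}. (-1) ^ card J * Q (card J))" by (rule dvd_sum)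
  with dvd_total have "int p dvd Q 0" by (simp add: dvd_add_left_iff)
  then obtain b where b: "b \<in> A" "int p dvd int b"
    using finA p by (auto simp: Q_def prime_dvd_prod_iff)
  then have "p \<le> b" using A by (intro dvd_imp_le) auto
  moreover have "b \<le> p - 1" using A b(1) by auto
  ultimately show False using prime_gt_0_nat[OF p] by linarith
qed

lemma submset_image_mset_set:
  assumes "finite I" and "T \<subseteq># image_mset f (mset_set I)"
  shows "\<exists>J\<subseteq>I. T = image_mset f (mset_set J)"
  using assms
proof (induction I arbitrary: T rule: finite_induct)
  case (insert x I)
  have "T - {#f x#} \<subseteq># image_mset f (mset_set I)"
    using insert.prems insert.hyps by (simp add: subset_eq_diff_conv)
  then obtain J where J: "J \<subseteq> I" "T - {#f x#} = image_mset f (mset_set J)"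
    using insert.IH by blast
  have "finite J" using J(1) insert.hyps(1) by (rule finite_subset)
  show ?case
  proof (cases "f x \<in># T")
    case True
    have "x \<notin> J" using J(1) insert.hyps(2) by blast
    have "T = add_mset (f x) (T - {#f x#})" using True by simp
    also have "\<dots> = image_mset f (mset_set (insert x J))"
      using J(2) \<open>x \<notin> J\<close> \<open>finite J\<close> by simp
    finally show ?thesis using J(1) by blast
  next
    case False
    then show ?thesis using J by (auto simp: diff_single_trivial)
  qed
qed simp

lemma mset_eq_image_mset_lessThan: "\<exists>s. S = image_mset s (mset_set {..<size S})"
proof -
  obtain xs where xs: "mset xs = S" using ex_mset by blast
  have "S = mset (map (nth xs) [0..<length xs])" using xs by (simp add: map_nth)
  also have "\<dots> = image_mset (nth xs) (mset_set {..<length xs})"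
    by (simp add: atLeast0LessThan)
  finally show ?thesis using xs by auto
qed

theorem exists_zero_sum_submset_avoiding_residues:
  fixes S :: "'a::{finite,ab_group_add} multiset" and e :: "nat \<Rightarrow> 'a"
  assumes p: "prime p" and B: "p_basis p UNIV r e q"
    and A: "A \<subseteq> {1..p - 1}" and big: "size S \<ge> 1 + (\<Sum>j<r. q j - 1) + card A"
  shows "\<exists>T. T \<subseteq># S \<and> T \<noteq> {#} \<and> sum_mset T = 0 \<and> (\<forall>b\<in>A. \<not> [size T = b] (mod p))"
proof -
  obtain s where S: "S = image_mset s (mset_set {..<size S})"
    using mset_eq_image_mset_lessThan by blast
  have "\<exists>J\<subseteq>{..<size S}. J \<noteq> {} \<and> sum s J = 0 \<and> (\<forall>b\<in>A. \<not> [card J = b] (mod p))"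
    using big by (intro exists_zero_sum_subset_avoiding_residues[OF p B finite_lessThan A]) simp
  then obtain J where J: "J \<subseteq> {..<size S}" "J \<noteq> {}" "sum s J = 0" "\<forall>b\<in>A. \<not> [card J = b] (mod p)"
    by blast
  have "finite J" using J(1) finite_subset by blast
  define T where "T = image_mset s (mset_set J)"
  have "T \<subseteq># S"
    unfolding T_def using J(1) by (subst S) (intro image_mset_subseteq_mono subset_imp_msubset_mset_set; simp)
  moreover have "T \<noteq> {#}" "size T = card J" "sum_mset T = sum s J"
    using J(2) \<open>finite J\<close> by (simp_all add: T_def mset_set_empty_iff sum_unfold_sum_mset)
  ultimately show ?thesis using J(3,4) by metis
qed

lemma exists_zero_sum_free_mset:
  fixes e :: "nat \<Rightarrow> 'a::{finite,ab_group_add}"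
  assumes p: "prime p" and B: "p_basis p UNIV r e q"
  shows "\<exists>S :: 'a multiset. size S = (\<Sum>j<r. q j - 1) \<and> \<not> has_nonempty_zero_sum_subseq S"
proof -
  txt \<open>Each \<open>e j\<close> repeated \<open>q j - 1\<close> times, indexed by \<open>(j, c)\<close> with \<open>c < q j - 1\<close>.\<close>
  define I where "I = (SIGMA j:{..<r}. {..<q j - 1})"
  define f where "f x = e (fst x)" for x :: "nat \<times> nat"
  define S where "S = image_mset f (mset_set I)"
  have fin: "finite I" by (simp add: I_def)
  have "size S = (\<Sum>j<r. q j - 1)" by (simp add: S_def I_def)
  moreover have "\<not> has_nonempty_zero_sum_subseq S"
  proof
    assume "has_nonempty_zero_sum_subseq S"
    then obtain T where T: "T \<subseteq># S" "T \<noteq> {#}" "sum_mset T = 0"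
      unfolding has_nonempty_zero_sum_subseq_def by blast
    obtain J where J: "J \<subseteq> I" "T = image_mset f (mset_set J)"
      using submset_image_mset_set[OF fin] T(1) unfolding S_def by blast
    define Jj where "Jj j = {c. (j, c) \<in> J}" for j
    have Jj: "Jj j \<subseteq> {..<q j - 1}" if "j < r" for j
      using J(1) that by (auto simp: Jj_def I_def)
    then have finJj: "finite (Jj j)" if "j < r" for j
      using that finite_subset by blast
    have "J = (SIGMA j:{..<r}. Jj j)" using J(1) by (auto simp: Jj_def I_def)
    then have "sum f J = (\<Sum>j<r. \<Sum>c\<in>Jj j. e j)"
      using finJj by (simp add: sum.Sigma f_def split_def)
    also have "\<dots> = (\<Sum>j<r. nsmul (card (Jj j)) (e j))"
      using finJj by (simp add: sum_constant_nsmul)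
    finally have sum0: "(\<Sum>j<r. nsmul (card (Jj j)) (e j)) = 0"
      using T(3) J(2) fin finite_subset[OF J(1)] by (simp add: sum_unfold_sum_mset)
    have "card (Jj j) < q j" if "j < r" for j
    proof -
      have "q j > 0" using p_basis_elements[OF B that] prime_gt_0_nat[OF p] by auto
      then show ?thesis using card_mono[OF _ Jj[OF that]] by fastforce
    qed
    then have "card (Jj j) = 0" if "j < r" for j
      using p_basis_independent[OF B _ sum0 that] by blast
    then have "J = {}" using finJj \<open>J = (SIGMA j:{..<r}. Jj j)\<close> by auto
    then show False using T(2) J(2) by simp
  qed
  ultimately show ?thesis by blast
qed

theorem davenport_eq_p_basis:
  fixes e :: "nat \<Rightarrow> 'a::{finite,ab_group_add}"
  assumes p: "prime p" and B: "p_basis p UNIV r e q"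
  shows "davenport TYPE('a) = 1 + (\<Sum>j<r. q j - 1)"
  unfolding davenport_def
proof (rule Least_equality)
  have "has_nonempty_zero_sum_subseq S" if "1 + (\<Sum>j<r. q j - 1) \<le> size S" for S :: "'a multiset"
  proof -
    have "\<exists>T. T \<subseteq># S \<and> T \<noteq> {#} \<and> sum_mset T = 0 \<and> (\<forall>b\<in>{}. \<not> [size T = b] (mod p))"
      using that by (intro exists_zero_sum_submset_avoiding_residues[OF p B]) simp_all
    then show ?thesis unfolding has_nonempty_zero_sum_subseq_def by blast
  qed
  then show "0 < 1 + (\<Sum>j<r. q j - 1) \<and>
      (\<forall>S::'a multiset. 1 + (\<Sum>j<r. q j - 1) \<le> size S \<longrightarrow> has_nonempty_zero_sum_subseq S)"
    by simp
next
  fix t assume t: "0 < t \<and> (\<forall>S::'a multiset. t \<le> size S \<longrightarrow> has_nonempty_zero_sum_subseq S)"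
  obtain S :: "'a multiset" where S: "size S = (\<Sum>j<r. q j - 1)" "\<not> has_nonempty_zero_sum_subseq S"
    using exists_zero_sum_free_mset[OF p B] by blast
  show "1 + (\<Sum>j<r. q j - 1) \<le> t"
  proof (rule ccontr)
    assume "\<not> 1 + (\<Sum>j<r. q j - 1) \<le> t"
    then have "t \<le> size S" using S(1) by simp
    then show False using t S(2) by blast
  qed
qed

theorem theorem2p3:
  fixes p :: nat and i :: nat and A :: "nat set"
    and S :: "'a::{finite, ab_group_add} multiset"
  assumes "prime p"
    and "\<exists>k. card (UNIV :: 'a set) = p ^ k"
    and "size S = davenport TYPE('a) + i - 1"
    and "i \<in> {1..p}"
    and "A \<subseteq> {1..p - 1}" and "card A = i - 1"
  shows "\<exists>T. T \<subseteq># S \<and> T \<noteq> {#} \<and> sum_mset T = 0 \<and>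
           (\<forall>b\<in>A. \<not> [size T = b] (mod p))"
proof -
  obtain k where "card (UNIV :: 'a set) = p ^ k" using assms(2) by blast
  moreover have "add_submonoid (UNIV :: 'a set)" by (simp add: add_submonoid_def)
  ultimately obtain r and e :: "nat \<Rightarrow> 'a" and q where B: "p_basis p UNIV r e q"
    using exists_p_basis[OF assms(1)] by blast
  have "size S = 1 + (\<Sum>j<r. q j - 1) + card A"
    using assms(3,4,6) davenport_eq_p_basis[OF assms(1) B] by simp
  then show ?thesis
    using exists_zero_sum_submset_avoiding_residues[OF assms(1) B assms(5)] by simp
qed

end
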